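(* Let $t_f$ be the final time of an extremal of the planar minimum-fuel problem with final constraints on energy and angular momentum modulus. Use the angles of the context and suppose that at $t_f$: (i) $\vec r=r(\cos\varphi,\sin\varphi)$, $\vec v=v(-\sin(\varphi-\gamma),\cos(\varphi-\gamma))$ with $v\neq0$ and $\cos\gamma\neq0$; (ii) for some nonzero constant $c$, $\vec p_r=c\,\omega(-\cos(\theta-\varphi),\sin(\theta-\varphi))$ and $\vec p_v=c(\sin(\theta-\varphi),\cos(\theta-\varphi))$; (iii) $\omega\, r\, v\sin(\theta-\gamma)=v_c^2\sin\theta$ with $v_c=\sqrt{\mu/r}$; (iv) the final transversality relation $(\vec p_r^{\,t}\vec r+\vec p_v^{\,t}\vec v)(\vec r^{\,t}\vec v)=(\vec p_v^{\,t}\vec r)(v^2+v_c^2)$ holds. Then $(v_c^2+\omega^2r^2)\sin\theta(t_f)=0$, hence $\sin\theta(t_f)=0$. If moreover the closed-loop relation $\sin(\gamma-\theta)=\frac{v_c}{v}\frac{\sin\theta}{\sqrt{1-3\sin^2\theta}}$ holds at $t_f$ and $\theta,\gamma\in(-\pi/2,\pi/2)$, then $\theta(t_f)=\gamma(t_f)=0$: the final point is an apside (perigee or apogee) of the targeted elliptical orbit.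
   Context: Planar motion in an Earth-centered inertial frame $(O,x,y)$. $\varphi$ is the longitude of the position measured from the $x$ axis; $\theta$ is the pitch angle (thrust direction $\vec u$) and $\gamma$ the flight path angle (velocity direction), both measured positively from the local horizontal; $\omega$ is the angular rate of $\vec u$ in the inertial frame. $\vec p_r,\vec p_v$ are the costates of position and velocity; the form (ii) and relations (iii) and the closed-loop relation for $\theta$ are properties of optimal extremals established in prior work (with $\omega=\sqrt{\mu/r^3}\,(1-3\sin^2\theta)$ and $\dot\omega=-\frac{3\mu}{r^3}\sin\theta\cos\theta$) and are taken here as hypotheses. $\mu>0$ is the gravitational constant. *)

theory Defs
  imports "HOL-Analysis.Analysis"
begin

end

theory Submission
  imports Defs
begin

text \<open>Writing every vector in polar form, each inner product in the transversality relation is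
  a product of moduli times the cosine of an angle difference; after cancelling c and r it becomes
  a relation between the pitch angle \<open>\<theta>\<close> and the flight path angle \<open>\<gamma>\<close>. Combined with relation
  (iii) and \<open>sin \<theta> = sin (\<theta> - \<gamma>) cos \<gamma> + cos (\<theta> - \<gamma>) sin \<gamma>\<close>, it forces
  \<open>v sin (\<theta> - \<gamma>) = - \<omega> r sin \<theta>\<close>, and substituting back into (iii) gives
  \<open>(v\<^sub>c\<^sup>2 + \<omega>\<^sup>2 r\<^sup>2) sin \<theta> = 0\<close>. The first factor is positive, so \<open>\<theta> = 0\<close> on \<open>(-\<pi>/2, \<pi>/2)\<close>,
  and then the closed-loop relation gives \<open>sin \<gamma> = 0\<close>.\<close>

lemma inner_polar:
  "(a * cos x, a * sin x) \<bullet> (b * cos y, b * sin y) = a * b * cos (x - y)"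
  by (simp add: cos_diff algebra_simps)

lemma transversality_in_flight_angles:
  fixes r v c \<omega> \<phi> \<gamma> \<theta> k :: real
  assumes "rr = (r * cos \<phi>, r * sin \<phi>)"
    and "vv = (v * (- sin (\<phi> - \<gamma>)), v * cos (\<phi> - \<gamma>))"
    and "pr = (c * \<omega> * (- cos (\<theta> - \<phi>)), c * \<omega> * sin (\<theta> - \<phi>))"
    and "pv = (c * sin (\<theta> - \<phi>), c * cos (\<theta> - \<phi>))"
  shows "(pr \<bullet> rr + pv \<bullet> vv) * (rr \<bullet> vv) - (pv \<bullet> rr) * (v\<^sup>2 + k) =
    c * r * ((v * cos (\<theta> - \<gamma>) - \<omega> * r * cos \<theta>) * v * sin \<gamma> - sin \<theta> * (v\<^sup>2 + k))"
proof -
  have vv: "vv = (v * cos (\<phi> - \<gamma> + pi/2), v * sin (\<phi> - \<gamma> + pi/2))"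
    by (simp add: assms(2) cos_add sin_add)
  have pr: "pr = (c * \<omega> * cos (pi + \<phi> - \<theta>), c * \<omega> * sin (pi + \<phi> - \<theta>))"
    by (simp add: assms(3) cos_diff sin_diff)
  have pv: "pv = (c * cos (pi/2 + \<phi> - \<theta>), c * sin (pi/2 + \<phi> - \<theta>))"
    by (simp add: assms(4) cos_add sin_add cos_diff sin_diff)
  have "pr \<bullet> rr = - c * \<omega> * r * cos \<theta>"
    unfolding pr assms(1) inner_polar by simp
  moreover have "pv \<bullet> vv = c * v * cos (\<theta> - \<gamma>)"
    unfolding pv vv inner_polar by (simp add: cos_diff)
  moreover have "rr \<bullet> vv = r * v * sin \<gamma>"
    unfolding assms(1) vv inner_polar by (simp add: cos_diff)
  moreover have "pv \<bullet> rr = c * r * sin \<theta>"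
    unfolding pv assms(1) inner_polar by (simp add: cos_diff)
  ultimately show ?thesis
    by (simp add: algebra_simps)
qed

lemma transversality_forces_pitch_factor:
  fixes v w k \<theta> \<gamma> :: real
  assumes transv: "(v * cos (\<theta> - \<gamma>) - w * cos \<theta>) * v * sin \<gamma> = sin \<theta> * (v\<^sup>2 + k)"
    and rel: "w * v * sin (\<theta> - \<gamma>) = k * sin \<theta>"
    and nz: "v * cos \<gamma> \<noteq> 0"
  shows "(k + w\<^sup>2) * sin \<theta> = 0"
proof -
  have sin_split: "sin \<theta> = sin (\<theta> - \<gamma>) * cos \<gamma> + cos (\<theta> - \<gamma>) * sin \<gamma>"
    using sin_add [of "\<theta> - \<gamma>" \<gamma>] by simp
  have cos_part: "v * cos \<theta> * sin \<gamma> = v * sin \<theta> * cos \<gamma> - v * sin (\<theta> - \<gamma>)"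
    by (simp add: sin_diff algebra_simps)
  have "- w * v * cos \<theta> * sin \<gamma> = v * sin (\<theta> - \<gamma>) * (v * cos \<gamma>) + k * sin \<theta>"
    using transv by (simp add: sin_split power2_eq_square algebra_simps)
  also have "- w * v * cos \<theta> * sin \<gamma> = - w * v * sin \<theta> * cos \<gamma> + k * sin \<theta>"
    using rel arg_cong [OF cos_part, of "\<lambda>x. - w * x"] by (simp add: algebra_simps)
  finally have "(v * cos \<gamma>) * (v * sin (\<theta> - \<gamma>)) = (v * cos \<gamma>) * (- w * sin \<theta>)"
    by (simp add: algebra_simps)
  then have "v * sin (\<theta> - \<gamma>) = - w * sin \<theta>"
    using nz mult_left_cancel by blast
  then have "k * sin \<theta> = - w\<^sup>2 * sin \<theta>"
    using rel by (metis mult.assoc mult.left_commute mult_minus_left power2_eq_square)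
  then show ?thesis
    by (simp add: algebra_simps)
qed

theorem mainTheorem5:
  fixes \<mu> r v \<phi> \<gamma> \<theta> \<omega> c v\<^sub>c :: real
    and rr vv pr pv :: "real \<times> real"
  assumes mu_pos: "\<mu> > 0"
    and r_pos: "r > 0"
    and omega_def: "\<omega> = sqrt (\<mu> / r ^ 3) * (1 - 3 * (sin \<theta>)\<^sup>2)"
    and vc_def: "v\<^sub>c = sqrt (\<mu> / r)"
    and pos: "rr = (r * cos \<phi>, r * sin \<phi>)"
    and vel: "vv = (v * (- sin (\<phi> - \<gamma>)), v * cos (\<phi> - \<gamma>))"
    and v_nz: "v \<noteq> 0"
    and cosg_nz: "cos \<gamma> \<noteq> 0"
    and c_nz: "c \<noteq> 0"
    and costate_r: "pr = (c * \<omega> * (- cos (\<theta> - \<phi>)), c * \<omega> * sin (\<theta> - \<phi>))"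
    and costate_v: "pv = (c * sin (\<theta> - \<phi>), c * cos (\<theta> - \<phi>))"
    and rel_iii: "\<omega> * r * v * sin (\<theta> - \<gamma>) = v\<^sub>c\<^sup>2 * sin \<theta>"
    and transv: "(pr \<bullet> rr + pv \<bullet> vv) * (rr \<bullet> vv) = (pv \<bullet> rr) * (v\<^sup>2 + v\<^sub>c\<^sup>2)"
  shows "(v\<^sub>c\<^sup>2 + \<omega>\<^sup>2 * r\<^sup>2) * sin \<theta> = 0 \<and> sin \<theta> = 0 \<and>
    ((sin (\<gamma> - \<theta>) = (v\<^sub>c / v) * (sin \<theta> / sqrt (1 - 3 * (sin \<theta>)\<^sup>2))
      \<and> \<theta> \<in> {-pi/2<..<pi/2} \<and> \<gamma> \<in> {-pi/2<..<pi/2})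
     \<longrightarrow> \<theta> = 0 \<and> \<gamma> = 0)"
proof -
  have "(pr \<bullet> rr + pv \<bullet> vv) * (rr \<bullet> vv) - (pv \<bullet> rr) * (v\<^sup>2 + v\<^sub>c\<^sup>2) = 0"
    using transv by simp
  then have "(v * cos (\<theta> - \<gamma>) - \<omega> * r * cos \<theta>) * v * sin \<gamma> = sin \<theta> * (v\<^sup>2 + v\<^sub>c\<^sup>2)"
    unfolding transversality_in_flight_angles [OF pos vel costate_r costate_v]
    using c_nz r_pos by simp
  then have factor: "(v\<^sub>c\<^sup>2 + \<omega>\<^sup>2 * r\<^sup>2) * sin \<theta> = 0"
    using transversality_forces_pitch_factor [of v \<theta> \<gamma> "\<omega> * r" "v\<^sub>c\<^sup>2"] rel_iii v_nz cosg_nz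
    by (simp add: power_mult_distrib)
  have "v\<^sub>c\<^sup>2 + \<omega>\<^sup>2 * r\<^sup>2 > 0"
    using vc_def mu_pos r_pos by (simp add: add_pos_nonneg)
  with factor have sin_zero: "sin \<theta> = 0"
    by simp
  have "\<theta> = 0 \<and> \<gamma> = 0"
    if "sin (\<gamma> - \<theta>) = (v\<^sub>c / v) * (sin \<theta> / sqrt (1 - 3 * (sin \<theta>)\<^sup>2))"
      and "\<theta> \<in> {-pi/2<..<pi/2}" and "\<gamma> \<in> {-pi/2<..<pi/2}"
    using that sin_zero sin_eq_0_pi [of \<theta>] sin_eq_0_pi [of \<gamma>] by auto
  with factor sin_zero show ?thesis
    by blast
qed

end
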